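(* Let $R$ be a commutative ring with identity, $\mathcal S$ an associative $R$-algebra with identity, $\mathcal M$ a $2$-torsion free bimodule over $\mathcal S$, $\delta$ a derivation on $\mathcal S$ and $f:\mathcal S\to\mathcal M$ a bimodule homomorphism over $\mathcal S$. If $D:\mathcal S\to\mathcal M$ is a Jordan $(\delta,f)$-derivation on $\mathcal M$, then for all $x,y,z\in\mathcal S$, $$D(xyz+zyx)=D(x)yz+D(z)yx+f(x)\delta(y)z+f(z)\delta(y)x+f(x)y\delta(z)+f(z)y\delta(x).$$
   Context: A derivation on $\mathcal S$ is an additive map $\delta$ with $\delta(ab)=\delta(a)b+a\delta(b)$. An additive map $D:\mathcal S\to\mathcal M$ is a Jordan $(\delta,f)$-derivation if $D(x^2)=D(x)x+f(x)\delta(x)$ for all $x\in\mathcal S$. $\mathcal M$ is $2$-torsion free if $2m=0$ implies $m=0$. *)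

theory Defs
  imports Main
begin

definition additive :: "('a::ab_group_add \<Rightarrow> 'b::ab_group_add) \<Rightarrow> bool" where
  "additive g \<longleftrightarrow> (\<forall>x y. g (x + y) = g x + g y)"

definition is_algebra :: "('r::comm_ring_1 \<Rightarrow> 's::ring_1 \<Rightarrow> 's) \<Rightarrow> bool" where
  "is_algebra sc \<longleftrightarrow>
     (\<forall>a x y. sc a (x + y) = sc a x + sc a y) \<and>
     (\<forall>a b x. sc (a + b) x = sc a x + sc b x) \<and>
     (\<forall>a b x. sc (a * b) x = sc a (sc b x)) \<and>
     (\<forall>x. sc 1 x = x) \<and>
     (\<forall>a x y. sc a (x * y) = sc a x * y) \<and>
     (\<forall>a x y. sc a (x * y) = x * sc a y)"

definition is_bimodule :: "('s::ring_1 \<Rightarrow> 'm::ab_group_add \<Rightarrow> 'm) \<Rightarrow> ('m \<Rightarrow> 's \<Rightarrow> 'm) \<Rightarrow> bool" where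
  "is_bimodule lm rm \<longleftrightarrow>
     (\<forall>s m n. lm s (m + n) = lm s m + lm s n) \<and>
     (\<forall>s t m. lm (s + t) m = lm s m + lm t m) \<and>
     (\<forall>s t m. lm (s * t) m = lm s (lm t m)) \<and>
     (\<forall>m. lm 1 m = m) \<and>
     (\<forall>s m n. rm (m + n) s = rm m s + rm n s) \<and>
     (\<forall>s t m. rm m (s + t) = rm m s + rm m t) \<and>
     (\<forall>s t m. rm m (s * t) = rm (rm m s) t) \<and>
     (\<forall>m. rm m 1 = m) \<and>
     (\<forall>s t m. lm s (rm m t) = rm (lm s m) t)"

definition two_torsion_free :: "'m::ab_group_add set \<Rightarrow> bool" where
  "two_torsion_free M \<longleftrightarrow> (\<forall>m\<in>M. m + m = 0 \<longrightarrow> m = 0)"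

definition is_derivation :: "('s::ring_1 \<Rightarrow> 's) \<Rightarrow> bool" where
  "is_derivation d \<longleftrightarrow> additive d \<and> (\<forall>a b. d (a * b) = d a * b + a * d b)"

text \<open>Bimodule homomorphism S \<rightarrow> M, S regarded as a bimodule over itself.\<close>
definition is_bimodule_hom ::
  "('s::ring_1 \<Rightarrow> 'm::ab_group_add \<Rightarrow> 'm) \<Rightarrow> ('m \<Rightarrow> 's \<Rightarrow> 'm) \<Rightarrow> ('s \<Rightarrow> 'm) \<Rightarrow> bool" where
  "is_bimodule_hom lm rm f \<longleftrightarrow> additive f \<and>
     (\<forall>a x. f (a * x) = lm a (f x)) \<and> (\<forall>x a. f (x * a) = rm (f x) a)"

definition is_jordan_der ::
  "('m::ab_group_add \<Rightarrow> 's::ring_1 \<Rightarrow> 'm) \<Rightarrow> ('s \<Rightarrow> 's) \<Rightarrow> ('s \<Rightarrow> 'm) \<Rightarrow> ('s \<Rightarrow> 'm) \<Rightarrow> bool" where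
  "is_jordan_der rm d f D \<longleftrightarrow> additive D \<and>
     (\<forall>x. D (x * x) = rm (D x) x + rm (f x) (d x))"

end

theory Submission
  imports Defs
begin

text \<open>Polarising \<open>D (x * x)\<close> (replace \<open>x\<close> by \<open>x + y\<close>) gives a formula for
  \<open>D (x * y + y * x)\<close>. Applying it to \<open>x * (x * y + y * x) + (x * y + y * x) * x\<close> and to
  \<open>(x * x) * y + y * (x * x)\<close>, whose difference is \<open>2 * x * y * x\<close>, determines \<open>D (x * y * x)\<close>
  up to 2-torsion. Polarising \<open>x * y * x\<close> once more (\<open>x\<close> replaced by \<open>x + z\<close>) yields the
  formula for \<open>D (x * y * z + z * y * x)\<close>.\<close>

lemma two_torsion_free_double_cancel:
  fixes a b :: "'m::ab_group_add"
  assumes "two_torsion_free (UNIV :: 'm set)" and "a + a = b + b"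
  shows "a = b"
proof -
  have "(a - b) + (a - b) = 0"
    using assms(2) by (simp add: algebra_simps)
  then have "a - b = 0"
    using assms(1) unfolding two_torsion_free_def by blast
  then show ?thesis
    by simp
qed

locale jordan_delta_f_der =
  fixes rm :: "'m::ab_group_add \<Rightarrow> 's::ring \<Rightarrow> 'm"
    and d :: "'s \<Rightarrow> 's"
    and f D :: "'s \<Rightarrow> 'm"
  assumes rm_add_left [simp]: "rm (m + n) s = rm m s + rm n s"
    and rm_add_right [simp]: "rm m (s + t) = rm m s + rm m t"
    and rm_rm [simp]: "rm (rm m s) t = rm m (s * t)"
    and d_add [simp]: "d (x + y) = d x + d y"
    and d_mult [simp]: "d (x * y) = d x * y + x * d y"
    and f_add [simp]: "f (x + y) = f x + f y"
    and f_mult_right [simp]: "f (x * s) = rm (f x) s"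
    and D_add [simp]: "D (x + y) = D x + D y"
    and D_square: "D (x * x) = rm (D x) x + rm (f x) (d x)"
begin

lemma D_jordan_product:
  "D (x * y + y * x) = rm (D x) y + rm (D y) x + rm (f x) (d y) + rm (f y) (d x)"
proof -
  have "D ((x + y) * (x + y)) = D (x * x) + D (x * y + y * x) + D (y * y)"
    by (simp add: algebra_simps del: D_add) (simp add: add.assoc)
  then show ?thesis
    unfolding D_square by (simp add: algebra_simps)
qed

lemma D_sandwich:
  assumes "two_torsion_free (UNIV :: 'm set)"
  shows "D (x * y * x) = rm (D x) (y * x) + rm (f x) (d y * x) + rm (f x) (y * d x)"
proof (rule two_torsion_free_double_cancel [OF assms])
  let ?xy = "x * y + y * x"
  have "x * ?xy + ?xy * x = ((x * x) * y + y * (x * x)) + (x * y * x + x * y * x)"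
    by (simp add: algebra_simps)
  then have "D (x * y * x) + D (x * y * x)
      = D (x * ?xy + ?xy * x) - D ((x * x) * y + y * (x * x))"
    by simp
  also have "\<dots> = (rm (D x) (y * x) + rm (f x) (d y * x) + rm (f x) (y * d x))
      + (rm (D x) (y * x) + rm (f x) (d y * x) + rm (f x) (y * d x))"
    unfolding D_jordan_product [of x ?xy] D_jordan_product [of "x * x" y]
      D_jordan_product [of x y] D_square
    by (simp add: distrib_left distrib_right mult.assoc del: D_add)
  finally show "D (x * y * x) + D (x * y * x) = \<dots>" .
qed

lemma D_jordan_triple_product:
  assumes "two_torsion_free (UNIV :: 'm set)"
  shows "D (x * y * z + z * y * x) =
           rm (D x) (y * z) + rm (D z) (y * x) + rm (f x) (d y * z) + rm (f z) (d y * x)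
           + rm (f x) (y * d z) + rm (f z) (y * d x)"
proof -
  have "D ((x + z) * y * (x + z)) = D (x * y * x) + D (z * y * z) + D (x * y * z + z * y * x)"
    by (simp add: distrib_left distrib_right add_ac)
  then show ?thesis
    unfolding D_sandwich [OF assms]
    by (simp add: algebra_simps)
qed

end

lemma jordan_delta_f_der_if_bimodule:
  assumes "is_bimodule lm rm"
    and "is_derivation d"
    and "is_bimodule_hom lm rm f"
    and "is_jordan_der rm d f D"
  shows "jordan_delta_f_der rm d f D"
  using assms
  unfolding jordan_delta_f_der_def is_bimodule_def is_derivation_def is_bimodule_hom_def
    is_jordan_der_def additive_def
  by metis

theorem lemma3p6:
  fixes sc :: "'r::comm_ring_1 \<Rightarrow> 's::ring_1 \<Rightarrow> 's"
    and lm :: "'s \<Rightarrow> 'm::ab_group_add \<Rightarrow> 'm"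
    and rm :: "'m \<Rightarrow> 's \<Rightarrow> 'm"
    and \<delta> :: "'s \<Rightarrow> 's"
    and f D :: "'s \<Rightarrow> 'm"
  assumes "is_algebra sc"
    and "is_bimodule lm rm"
    and "two_torsion_free (UNIV :: 'm set)"
    and "is_derivation \<delta>"
    and "is_bimodule_hom lm rm f"
    and "is_jordan_der rm \<delta> f D"
  shows "\<forall>x y z. D (x * y * z + z * y * x) =
           rm (D x) (y * z) + rm (D z) (y * x) + rm (f x) (\<delta> y * z) + rm (f z) (\<delta> y * x)
           + rm (f x) (y * \<delta> z) + rm (f z) (y * \<delta> x)"
proof -
  interpret jordan_delta_f_der rm \<delta> f D
    using assms(2,4-6) by (rule jordan_delta_f_der_if_bimodule)
  show ?thesis
    using D_jordan_triple_product [OF assms(3)] by blast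
qed

end
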